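(* For all $a\in\mathbb{R}$ and $y>0$, $$\frac{\Gamma(a,y)}{\Gamma(a-1,y)}>y.$$
   Context: $\Gamma(a,y)=\int_y^{\infty} t^{a-1}e^{-t}\,dt$ is the upper incomplete gamma function, defined for all real $a$ when $y>0$. *)

theory Defs
  imports "HOL-Analysis.Analysis"
begin

definition upper_inc_Gamma :: "real \<Rightarrow> real \<Rightarrow> real" where
  "upper_inc_Gamma a y = (LBINT t:{y..}. t powr (a - 1) * exp (- t))"

end

theory Submission
  imports Defs
begin

text \<open>Since \<open>t powr (a - 1) = t * t powr (a - 2)\<close> and \<open>t > y\<close> on the range of integration,
  \<open>\<Gamma>(a,y) - y \<Gamma>(a-1,y)\<close> is the integral of \<open>(t - y) t powr (a - 2) e\<^sup>-\<^sup>t\<close> over \<open>[y,\<infinity>)\<close>,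
  a function that is positive on \<open>(y,\<infinity>)\<close>; and \<open>\<Gamma>(a-1,y) > 0\<close> for the same reason.\<close>

lemma set_integrable_powr_exp_Ici:
  fixes b y :: real
  assumes "y > 0"
  shows "set_integrable lborel {y..} (\<lambda>t. t powr b * exp (- t))"
proof -
  define c where "c = \<bar>b\<bar>"
  have "((\<lambda>t. t powr ((c + 1) - 1) / exp t) has_integral Gamma (c + 1)) {0..}"
    by (rule Gamma_integral_real) (simp add: c_def)
  then have "(\<lambda>t. t powr c / exp t) absolutely_integrable_on {0..}"
    by (intro nonnegative_absolutely_integrable_1) (auto simp: integrable_on_def)
  then have "set_integrable lborel {0..} (\<lambda>t. t powr c / exp t)"
    unfolding set_integrable_def by (subst (asm) integrable_completion) auto
  then have "set_integrable lborel {y..} (\<lambda>t. t powr c / exp t)"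
    by (rule set_integrable_subset) (use assms in auto)
  then have major: "set_integrable lborel {y..} (\<lambda>t. y powr (b - c) * (t powr c / exp t))"
    by (rule set_integrable_mult_right)
  \<comment> \<open>domination by the Euler integrand of \<open>\<Gamma>(c + 1)\<close>, using \<open>b - c \<le> 0\<close> and \<open>t \<ge> y\<close>\<close>
  have "norm (t powr b * exp (- t)) \<le> norm (y powr (b - c) * (t powr c / exp t))"
    if "t \<ge> y" for t
  proof -
    have "t powr (b - c) \<le> y powr (b - c)"
      using that assms by (intro powr_mono2') (auto simp: c_def)
    then have "t powr (b - c) * t powr c \<le> y powr (b - c) * t powr c"
      by (intro mult_right_mono) auto
    then show ?thesis
      by (simp add: powr_add[symmetric] exp_minus field_simps)
  qed
  then show ?thesis
    by (intro set_integrable_bound[OF major])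
       (auto simp: set_borel_measurable_def)
qed

lemma set_integral_pos_Ici:
  fixes f :: "real \<Rightarrow> real"
  assumes int: "set_integrable lborel {y..} f"
    and nonneg: "\<And>t. t \<ge> y \<Longrightarrow> f t \<ge> 0"
    and pos: "\<And>t. t > y \<Longrightarrow> f t > 0"
  shows "(LBINT t:{y..}. f t) > 0"
proof -
  let ?g = "\<lambda>t. indicator {y..} t *\<^sub>R f t"
  have g_int: "integrable lborel ?g"
    using int unfolding set_integrable_def .
  have g_nonneg: "AE t in lborel. 0 \<le> ?g t"
    by (rule AE_I2) (auto simp: indicator_def nonneg)
  have "(LBINT t:{y..}. f t) \<noteq> 0"
  proof
    assume "(LBINT t:{y..}. f t) = 0"
    then have "AE t in lborel. ?g t = 0"
      using integral_nonneg_eq_0_iff_AE[OF g_int g_nonneg]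
      by (simp add: set_lebesgue_integral_def)
    then have "AE t in lborel. t \<notin> {y<..<y + 1}"
      by eventually_elim (use pos in \<open>fastforce simp: indicator_def\<close>)
    then have "emeasure lborel {y<..<y + 1} = 0"
      by (subst AE_iff_measurable[symmetric, where P = "\<lambda>t. t \<notin> {y<..<y + 1}"]) auto
    then show False
      by simp
  qed
  moreover have "(LBINT t:{y..}. f t) \<ge> 0"
    unfolding set_lebesgue_integral_def using g_nonneg g_int by (simp add: integral_nonneg_AE)
  ultimately show ?thesis
    by simp
qed

lemma upper_inc_Gamma_pos:
  assumes "y > 0"
  shows "upper_inc_Gamma a y > 0"
  unfolding upper_inc_Gamma_def
  using assms by (intro set_integral_pos_Ici set_integrable_powr_exp_Ici) auto

lemma upper_inc_Gamma_gt_mult: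
  assumes "y > 0"
  shows "upper_inc_Gamma a y > y * upper_inc_Gamma (a - 1) y"
proof -
  let ?f = "\<lambda>t. t powr (a - 1) * exp (- t)"
  let ?g = "\<lambda>t. y * (t powr (a - 1 - 1) * exp (- t))"
  have int_f: "set_integrable lborel {y..} ?f"
    and int_g: "set_integrable lborel {y..} ?g"
    using assms by (auto intro: set_integrable_powr_exp_Ici set_integrable_mult_right)
  have diff: "?f t - ?g t = (t - y) * (t powr (a - 1 - 1) * exp (- t))" if "t \<ge> y" for t
  proof -
    have "t powr (a - 1) = t * t powr (a - 1 - 1)"
      using that assms by (simp add: powr_mult_base)
    then show ?thesis
      by (simp add: algebra_simps)
  qed
  have "0 < (LBINT t:{y..}. ?f t - ?g t)"
  proof (rule set_integral_pos_Ici[OF set_integral_diff(1)[OF int_f int_g]])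
    show "?f t - ?g t \<ge> 0" if "t \<ge> y" for t
      using that assms by (simp only: diff) simp
    show "?f t - ?g t > 0" if "t > y" for t
      using that assms by (simp only: diff less_imp_le) simp
  qed
  also have "\<dots> = upper_inc_Gamma a y - y * upper_inc_Gamma (a - 1) y"
    unfolding upper_inc_Gamma_def set_integral_diff(2)[OF int_f int_g] set_integral_mult_right ..
  finally show ?thesis
    by simp
qed

theorem proposition5:
  fixes a y :: real
  assumes "y > 0"
  shows "upper_inc_Gamma a y / upper_inc_Gamma (a - 1) y > y"
  using upper_inc_Gamma_gt_mult[OF assms, of a] upper_inc_Gamma_pos[OF assms, of "a - 1"]
  by (simp add: field_simps)

end
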